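(* If a topological space $X$ has a $\pi$-tree, then the Tychonoff products $X\times\mathcal{N}$, $X\times\mathcal{R}_{\mathcal{S}}$ and $X\times\mathcal{R}_{\mathcal{S}}^{\,\omega}$ also have a $\pi$-tree.
   Context: $\mathcal{N}$ is the Baire space ${}^{\omega}\omega$ with the product topology ($\omega$ discrete); $\mathcal{R}_{\mathcal{S}}$ is the Sorgenfrey line (reals with the topology generated by $[a,b)$), and $\mathcal{R}_{\mathcal{S}}^{\,\omega}$ its countable Tychonoff power. Neighbourhoods are not necessarily open. ${}^{<\omega}\omega$ is the set of finite sequences of natural numbers. A tree is a strict partial order in which the set of predecessors of every node is well-ordered; a branch is a maximal chain; $\mathrm{sons}(x)$ is the set of immediate successors of $x$; $0$ denotes the least node. A foliage tree is a pair $\mathbf{F}=(T,l)$ with $T$ a tree (skeleton) and $l$ a function on its nodes, $\mathbf{F}_x:=l(x)$; tree notions apply via the skeleton. $\mathrm{shoot}_{\mathbf{F}}(v)=\{\bigcup_{x\in C}\mathbf{F}_x: C\text{ a cofinite subset of }\mathrm{sons}_{\mathbf{F}}(v)\}$; $\mathrm{scope}_{\mathbf{F}}(p)=\{x:p\in\mathbf{F}_x\}$. $\gamma\gg\delta$ means every nonempty $D\in\delta$ contains some nonempty $G\in\gamma$. $\mathbf{F}$ is locally strict if each non-maximal leaf $\mathbf{F}_x$ is the disjoint union of $\mathbf{F}_s$, $s\in\mathrm{sons}(x)$; has strict branches if it has a node and for each branch $B$, $\bigcap_{x\in B}\mathbf{F}_x$ is a singleton; is open in $X$ if all leaves are open in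 $X$; is a foliage $\omega,\omega$-tree if its skeleton is order-isomorphic to $({}^{<\omega}\omega,\subsetneq)$. A Baire foliage tree on $X$ is an open in $X$, locally strict foliage $\omega,\omega$-tree with strict branches and $\mathbf{F}_{0_{\mathbf{F}}}=X$. $\mathbf{F}$ grows into $X$ if for every $p\in X$ and neighbourhood $U$ of $p$ there is $z\in\mathrm{scope}_{\mathbf{F}}(p)$ with $\mathrm{shoot}_{\mathbf{F}}(z)\gg\{U\}$. A $\pi$-tree on $X$ is a Baire foliage tree on $X$ that grows into $X$; a space has a $\pi$-tree if there is one on it. *)

theory Defs
  imports "HOL-Analysis.Analysis" "HOL-Library.Sublist"
begin

text \<open>Foliage omega,omega-trees are represented with the canonical skeleton
  (finite sequences of naturals, ordered by strict prefix); the leaf function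
  is l :: nat list => 'a set.\<close>

definition sons :: "nat list \<Rightarrow> nat list set" where
  "sons x = {y. strict_prefix x y \<and> \<not> (\<exists>z. strict_prefix x z \<and> strict_prefix z y)}"

definition is_chain :: "nat list set \<Rightarrow> bool" where
  "is_chain C \<longleftrightarrow> (\<forall>x\<in>C. \<forall>y\<in>C. x = y \<or> strict_prefix x y \<or> strict_prefix y x)"

definition is_branch :: "nat list set \<Rightarrow> bool" where
  "is_branch B \<longleftrightarrow> is_chain B \<and> \<not> (\<exists>C. is_chain C \<and> B \<subset> C)"

definition shoot :: "(nat list \<Rightarrow> 'a set) \<Rightarrow> nat list \<Rightarrow> 'a set set" where
  "shoot l v = {\<Union> (l ` C) | C. C \<subseteq> sons v \<and> finite (sons v - C)}"

definition scope :: "(nat list \<Rightarrow> 'a set) \<Rightarrow> 'a \<Rightarrow> nat list set" where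
  "scope l p = {x. p \<in> l x}"

definition gg :: "'a set set \<Rightarrow> 'a set set \<Rightarrow> bool" (infix "\<ggreater>" 50) where
  "\<gamma> \<ggreater> \<delta> \<longleftrightarrow> (\<forall>D\<in>\<delta>. D \<noteq> {} \<longrightarrow> (\<exists>G\<in>\<gamma>. G \<noteq> {} \<and> G \<subseteq> D))"

definition locally_strict :: "(nat list \<Rightarrow> 'a set) \<Rightarrow> bool" where
  "locally_strict l \<longleftrightarrow> (\<forall>x. sons x \<noteq> {} \<longrightarrow>
      l x = \<Union> (l ` sons x) \<and>
      (\<forall>s\<in>sons x. \<forall>t\<in>sons x. s \<noteq> t \<longrightarrow> l s \<inter> l t = {}))"

definition strict_branches :: "(nat list \<Rightarrow> 'a set) \<Rightarrow> bool" where
  "strict_branches l \<longleftrightarrow> (\<forall>B. is_branch B \<longrightarrow> (\<exists>p. \<Inter> (l ` B) = {p}))"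

definition is_neighbourhood :: "'a topology \<Rightarrow> 'a \<Rightarrow> 'a set \<Rightarrow> bool" where
  "is_neighbourhood X p U \<longleftrightarrow> U \<subseteq> topspace X \<and> (\<exists>V. openin X V \<and> p \<in> V \<and> V \<subseteq> U)"

definition baire_foliage_tree :: "'a topology \<Rightarrow> (nat list \<Rightarrow> 'a set) \<Rightarrow> bool" where
  "baire_foliage_tree X l \<longleftrightarrow> (\<forall>x. openin X (l x)) \<and> locally_strict l \<and>
      strict_branches l \<and> l [] = topspace X"

definition grows_into :: "(nat list \<Rightarrow> 'a set) \<Rightarrow> 'a topology \<Rightarrow> bool" where
  "grows_into l X \<longleftrightarrow> (\<forall>p\<in>topspace X. \<forall>U. is_neighbourhood X p U \<longrightarrow>
      (\<exists>z\<in>scope l p. shoot l z \<ggreater> {U}))"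

definition pi_tree :: "'a topology \<Rightarrow> (nat list \<Rightarrow> 'a set) \<Rightarrow> bool" where
  "pi_tree X l \<longleftrightarrow> baire_foliage_tree X l \<and> grows_into l X"

definition has_pi_tree :: "'a topology \<Rightarrow> bool" where
  "has_pi_tree X \<longleftrightarrow> (\<exists>l. pi_tree X l)"

definition baire_space :: "(nat \<Rightarrow> nat) topology" where
  "baire_space = product_topology (\<lambda>_. discrete_topology UNIV) UNIV"

definition sorgenfrey :: "real topology" where
  "sorgenfrey = topology_generated_by {{a..<b} | a b. True}"

definition sorgenfrey_power :: "(nat \<Rightarrow> real) topology" where
  "sorgenfrey_power = product_topology (\<lambda>_. sorgenfrey) UNIV"

end

theory Submission
  imports Defs "HOL-Library.Nat_Bijection"
begin

(* A Baire foliage tree is the same thing as a bijection phi from the space onto the Baire space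
  whose cylinders are open: the leaf at a finite sequence x consists of the points whose code
  starts with x.  The tree grows into X iff for every point p and neighbourhood U there is a
  level n such that every point whose code agrees with that of p below n and is large enough
  at n lies in U.

  For X x Y the codes are merged blockwise: block n holds the value of phi p at n and the values
  of gamma q at 2n and 2n + 1, and it is encoded by two numbers, its minimum and its index among
  the triples with that minimum.  A large first number thus forces all three values to be large,
  so growth of X x Y at level 2n follows from growth of X at level n and of Y at level 2n.  As
  the level n can be chosen arbitrarily deep in X, it suffices that Y grows at all sufficiently
  deep even levels.  The identity coding of the Baire space and a coding of the Sorgenfrey line
  by half-open subintervals grow at all deep levels, and merging countably many such codes
  along diagonals gives a coding of the countable power growing at all deep even levels. *)

section \<open>The tree of finite sequences\<close>

definition seq_prefix :: "(nat \<Rightarrow> 'a) \<Rightarrow> nat \<Rightarrow> 'a list" where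
  "seq_prefix f n = map f [0..<n]"

lemma seq_prefix_0 [simp]: "seq_prefix f 0 = []"
  by (simp add: seq_prefix_def)

lemma seq_prefix_Suc: "seq_prefix f (Suc n) = seq_prefix f n @ [f n]"
  by (simp add: seq_prefix_def)

lemma seq_prefix_Suc_Cons: "seq_prefix f (Suc n) = f 0 # seq_prefix (\<lambda>i. f (Suc i)) n"
  by (simp add: seq_prefix_def upt_conv_Cons map_Suc_upt[symmetric] del: upt_Suc)

lemma length_seq_prefix [simp]: "length (seq_prefix f n) = n"
  by (simp add: seq_prefix_def)

lemma nth_seq_prefix [simp]: "i < n \<Longrightarrow> seq_prefix f n ! i = f i"
  by (simp add: seq_prefix_def)

lemma seq_prefix_eq_iff: "seq_prefix f (length x) = x \<longleftrightarrow> (\<forall>i<length x. f i = x ! i)"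
  by (auto simp: list_eq_iff_nth_eq)

lemma seq_prefix_eq_all_iff: "(\<forall>n. seq_prefix f n = seq_prefix g n) \<longleftrightarrow> f = g"
proof
  assume "\<forall>n. seq_prefix f n = seq_prefix g n"
  then have "seq_prefix f (Suc i) ! i = seq_prefix g (Suc i) ! i" for i by simp
  then show "f = g" by (simp add: fun_eq_iff)
qed simp

lemma prefix_seq_prefix:
  assumes "m \<le> n"
  shows "prefix (seq_prefix f m) (seq_prefix f n)"
proof -
  from assms have "[0..<n] = [0..<m] @ [m..<n]"
    by (metis le0 le_add_diff_inverse upt_add_eq_append)
  then show ?thesis by (simp add: seq_prefix_def)
qed

lemma sons_eq_range_snoc: "sons x = range (\<lambda>n. x @ [n])"
proof (intro set_eqI iffI)
  fix y assume "y \<in> sons x"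
  then have sp: "strict_prefix x y" and no_between: "\<not> (\<exists>z. strict_prefix x z \<and> strict_prefix z y)"
    by (auto simp: sons_def)
  from sp obtain a c where y: "y = x @ a # c"
    by (metis append_Nil2 neq_Nil_conv prefix_def strict_prefix_def)
  have "c = []"
  proof (rule ccontr)
    assume "c \<noteq> []"
    then have "strict_prefix x (x @ [a]) \<and> strict_prefix (x @ [a]) y"
      using y by (auto simp: strict_prefix_def)
    with no_between show False by blast
  qed
  then show "y \<in> range (\<lambda>n. x @ [n])" using y by auto
next
  fix y assume "y \<in> range (\<lambda>n. x @ [n])"
  then show "y \<in> sons x"
    by (auto simp: sons_def strict_prefix_def dest!: prefix_length_less)
qed

lemma is_chain_iff_prefix: "is_chain C \<longleftrightarrow> (\<forall>x\<in>C. \<forall>y\<in>C. prefix x y \<or> prefix y x)"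
proof -
  have "(x = y \<or> strict_prefix x y \<or> strict_prefix y x) \<longleftrightarrow> prefix x y \<or> prefix y x" for x y :: "nat list"
    by (metis prefix_order.le_less)
  then show ?thesis unfolding is_chain_def by simp
qed

lemma prefix_of_comparable_shorter:
  "prefix x y \<or> prefix y x \<Longrightarrow> length x \<le> length y \<Longrightarrow> prefix x y"
  using prefix_length_prefix[of x x y] by auto

lemma is_branch_range_seq_prefix: "is_branch (range (seq_prefix f))"
  unfolding is_branch_def
proof (intro conjI notI)
  show "is_chain (range (seq_prefix f))"
    unfolding is_chain_iff_prefix
  proof (intro ballI)
    fix u v assume "u \<in> range (seq_prefix f)" "v \<in> range (seq_prefix f)"
    then obtain m n where "u = seq_prefix f m" "v = seq_prefix f n" by blast
    then show "prefix u v \<or> prefix v u"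
      by (cases "m \<le> n") (simp_all add: prefix_seq_prefix)
  qed
next
  assume "\<exists>C. is_chain C \<and> range (seq_prefix f) \<subset> C"
  then obtain C y where C: "is_chain C" "range (seq_prefix f) \<subseteq> C" "y \<in> C"
    and y: "y \<notin> range (seq_prefix f)"
    by blast
  let ?s = "seq_prefix f (length y)"
  have comparable: "prefix y ?s \<or> prefix ?s y"
    using C unfolding is_chain_iff_prefix by blast
  then have "prefix y ?s" by (rule prefix_of_comparable_shorter) simp
  moreover have "prefix ?s y"
    using comparable by (subst (asm) disj_commute) (rule prefix_of_comparable_shorter, simp_all)
  ultimately have "y = ?s" by (rule prefix_order.antisym)
  with y show False by blast
qed

lemma branch_comparable:
  "is_branch B \<Longrightarrow> x \<in> B \<Longrightarrow> y \<in> B \<Longrightarrow> prefix x y \<or> prefix y x"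
  unfolding is_branch_def is_chain_iff_prefix by blast

lemma branch_memI:
  assumes "is_branch B" "\<And>z. z \<in> B \<Longrightarrow> prefix z t \<or> prefix t z"
  shows "t \<in> B"
proof -
  have "is_chain (insert t B)"
    unfolding is_chain_iff_prefix using branch_comparable[OF assms(1)] assms(2) by fastforce
  then show ?thesis
    using assms(1) unfolding is_branch_def by blast
qed

lemma branch_prefix_closed:
  assumes B: "is_branch B" and "y \<in> B" "prefix t y"
  shows "t \<in> B"
proof (rule branch_memI[OF B])
  fix z assume "z \<in> B"
  with B have "prefix z y \<or> prefix y z"
    using \<open>y \<in> B\<close> by (rule branch_comparable)
  then show "prefix z t \<or> prefix t z"
  proof
    assume "prefix z y"
    then show ?thesis using \<open>prefix t y\<close> by (rule prefix_same_cases)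
  next
    assume "prefix y z"
    then show ?thesis using \<open>prefix t y\<close> by (metis prefix_order.trans)
  qed
qed

lemma branch_unbounded:
  assumes B: "is_branch B"
  shows "\<exists>y\<in>B. n \<le> length y"
proof (induction n)
  case 0
  have "[] \<in> B" by (rule branch_memI[OF B]) simp
  then show ?case by blast
next
  case (Suc n)
  then obtain y where y: "y \<in> B" "n \<le> length y" by blast
  show ?case
  proof (cases "\<exists>z\<in>B. Suc n \<le> length z")
    case False
    have "prefix z (y @ [0])" if z: "z \<in> B" for z
    proof -
      have "prefix z y \<or> prefix y z" using B z y(1) by (rule branch_comparable)
      moreover have "length z \<le> length y" using False z y(2) by (meson not_less_eq_eq order_trans)
      ultimately have "prefix z y" by (rule prefix_of_comparable_shorter)
      then show ?thesis by (simp add: prefix_append)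
    qed
    then have "y @ [0] \<in> B" by (intro branch_memI[OF B]) simp
    then show ?thesis using y(2) by (intro bexI[of _ "y @ [0]"]) simp_all
  qed blast
qed

lemma branch_eq_range_seq_prefix:
  assumes B: "is_branch B"
  shows "\<exists>f. B = range (seq_prefix f)"
proof -
  have "\<forall>n. \<exists>y. y \<in> B \<and> length y = n"
  proof
    fix n
    obtain y where "y \<in> B" "n \<le> length y" using branch_unbounded[OF B] by blast
    moreover from this have "take n y \<in> B"
      using branch_prefix_closed[OF B _ take_is_prefix] by blast
    ultimately show "\<exists>y. y \<in> B \<and> length y = n" by (intro exI[of _ "take n y"]) simp
  qed
  from choice[OF this] obtain g where g: "\<And>n. g n \<in> B" "\<And>n. length (g n) = n"
    by blast
  have along_g: "y = seq_prefix (\<lambda>i. g (Suc i) ! i) (length y)" if "y \<in> B" for y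
  proof (rule nth_equalityI)
    fix i assume i: "i < length y"
    have "prefix (g (Suc i)) y \<or> prefix y (g (Suc i))"
      using B g(1) that by (rule branch_comparable)
    then have "prefix (g (Suc i)) y"
      by (rule prefix_of_comparable_shorter) (use i g(2) in simp)
    then obtain zs where "y = g (Suc i) @ zs" unfolding prefix_def ..
    then show "y ! i = seq_prefix (\<lambda>i. g (Suc i) ! i) (length y) ! i"
      using i g(2)[of "Suc i"] by (simp add: nth_append)
  qed simp
  have "B = range (seq_prefix (\<lambda>i. g (Suc i) ! i))"
  proof
    show "B \<subseteq> range (seq_prefix (\<lambda>i. g (Suc i) ! i))" using along_g by blast
    show "range (seq_prefix (\<lambda>i. g (Suc i) ! i)) \<subseteq> B"
    proof (rule image_subsetI)
      fix n
      show "seq_prefix (\<lambda>i. g (Suc i) ! i) n \<in> B"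
        using along_g[OF g(1)[of n]] g(1)[of n] g(2)[of n] by simp
    qed
  qed
  then show ?thesis by blast
qed

section \<open>Baire foliage trees as codings by the Baire space\<close>

lemma image_eq_UNIV_preimageE:
  assumes "\<phi> ` S = UNIV"
  obtains p where "p \<in> S" "\<phi> p = f"
proof -
  have "f \<in> \<phi> ` S" using assms by simp
  then obtain p where "p \<in> S" "f = \<phi> p" by (rule imageE)
  then show thesis using that by simp
qed

definition cylinder :: "('b \<Rightarrow> nat \<Rightarrow> nat) \<Rightarrow> 'b set \<Rightarrow> nat list \<Rightarrow> 'b set" where
  "cylinder \<phi> S x = {s\<in>S. \<forall>i<length x. \<phi> s i = x ! i}"

lemma cylinder_Nil [simp]: "cylinder \<phi> S [] = S"
  by (simp add: cylinder_def)

lemma cylinder_snoc: "cylinder \<phi> S (x @ [n]) = {s \<in> cylinder \<phi> S x. \<phi> s (length x) = n}"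
  unfolding cylinder_def by (auto simp: nth_append less_Suc_eq)

lemma mem_cylinder_seq_prefix: "s \<in> cylinder \<phi> S (seq_prefix f n) \<longleftrightarrow> s \<in> S \<and> (\<forall>i<n. \<phi> s i = f i)"
  unfolding cylinder_def by auto

lemma mem_cylinder_iff: "s \<in> cylinder \<phi> S x \<longleftrightarrow> s \<in> S \<and> seq_prefix (\<phi> s) (length x) = x"
  unfolding cylinder_def seq_prefix_eq_iff by blast

lemma cylinder_subset: "cylinder \<phi> S x \<subseteq> S"
  unfolding cylinder_def by auto

lemma locally_strict_iff:
  "locally_strict l \<longleftrightarrow>
    (\<forall>x. l x = (\<Union>n. l (x @ [n]))) \<and> (\<forall>x n m. n \<noteq> m \<longrightarrow> l (x @ [n]) \<inter> l (x @ [m]) = {})"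
proof -
  have "(\<forall>s\<in>sons x. \<forall>t\<in>sons x. s \<noteq> t \<longrightarrow> l s \<inter> l t = {}) \<longleftrightarrow>
      (\<forall>n m. n \<noteq> m \<longrightarrow> l (x @ [n]) \<inter> l (x @ [m]) = {})" for x
    unfolding sons_eq_range_snoc by auto
  moreover have "\<Union> (l ` sons x) = (\<Union>n. l (x @ [n]))" for x
    unfolding sons_eq_range_snoc by (simp add: image_image)
  moreover have "sons x \<noteq> {}" for x
    by (simp add: sons_eq_range_snoc)
  ultimately show ?thesis
    unfolding locally_strict_def by (simp add: all_conj_distrib)
qed

definition open_coding :: "'a topology \<Rightarrow> ('a \<Rightarrow> nat \<Rightarrow> nat) \<Rightarrow> bool" where
  "open_coding X \<phi> \<longleftrightarrow> bij_betw \<phi> (topspace X) UNIV \<and> (\<forall>x. openin X (cylinder \<phi> (topspace X) x))"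

lemma baire_foliage_tree_cylinder:
  assumes "open_coding X \<phi>"
  shows "baire_foliage_tree X (cylinder \<phi> (topspace X))"
proof -
  let ?S = "topspace X"
  have bij: "bij_betw \<phi> ?S UNIV" using assms by (simp add: open_coding_def)
  have "locally_strict (cylinder \<phi> ?S)"
    unfolding locally_strict_iff by (auto simp: cylinder_snoc)
  moreover have "strict_branches (cylinder \<phi> ?S)"
    unfolding strict_branches_def
  proof (intro allI impI)
    fix B assume "is_branch B"
    then obtain f where B: "B = range (seq_prefix f)" using branch_eq_range_seq_prefix by blast
    obtain p where p: "p \<in> ?S" "\<phi> p = f"
      using bij_betw_imp_surj_on[OF bij] by (rule image_eq_UNIV_preimageE)
    have "s = p" if "s \<in> \<Inter> (cylinder \<phi> ?S ` B)" for s
    proof -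
      have "s \<in> cylinder \<phi> ?S (seq_prefix f (Suc i))" for i using that B by blast
      then have "s \<in> ?S" "\<phi> s = \<phi> p" using p by (auto simp: mem_cylinder_seq_prefix)
      then show "s = p" using inj_onD[OF bij_betw_imp_inj_on[OF bij]] p(1) by simp
    qed
    moreover have "p \<in> \<Inter> (cylinder \<phi> ?S ` B)" using p B by (auto simp: mem_cylinder_seq_prefix)
    ultimately show "\<exists>p. \<Inter> (cylinder \<phi> ?S ` B) = {p}" by blast
  qed
  ultimately show ?thesis using assms by (simp add: baire_foliage_tree_def open_coding_def)
qed

primrec descend :: "(nat list \<Rightarrow> 'b set) \<Rightarrow> 'b \<Rightarrow> nat \<Rightarrow> nat list" where
  "descend l p 0 = []"
| "descend l p (Suc n) = descend l p n @ [SOME i. p \<in> l (descend l p n @ [i])]"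

lemma mem_descend:
  assumes "locally_strict l" "p \<in> l []"
  shows "p \<in> l (descend l p n)"
proof (induction n)
  case (Suc n)
  then have "\<exists>i. p \<in> l (descend l p n @ [i])"
    using assms(1) unfolding locally_strict_iff by blast
  then have "p \<in> l (descend l p n @ [SOME i. p \<in> l (descend l p n @ [i])])" by (rule someI_ex)
  then show ?case by simp
qed (use assms in simp)

lemma leaf_snoc_subset: "locally_strict l \<Longrightarrow> l (x @ [n]) \<subseteq> l x"
  unfolding locally_strict_iff by blast

lemma leaf_subset_root: "locally_strict l \<Longrightarrow> l x \<subseteq> l []"
  by (induction x rule: rev_induct) (auto dest: leaf_snoc_subset)

lemma leaves_disjoint:
  assumes "locally_strict l" "length x = length y" "x \<noteq> y"
  shows "l x \<inter> l y = {}"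
  using assms(2,3)
proof (induction x arbitrary: y rule: rev_induct)
  case (snoc a x)
  obtain y' b where y: "y = y' @ [b]"
    using snoc.prems(1) by (cases y rule: rev_cases) auto
  have len: "length x = length y'" using snoc.prems(1) y by simp
  show ?case
  proof (cases "x = y'")
    case True
    then have "a \<noteq> b" using snoc.prems(2) y by simp
    then show ?thesis using assms(1) y True unfolding locally_strict_iff by blast
  next
    case False
    then have "l x \<inter> l y' = {}" using snoc.IH len by blast
    then show ?thesis using leaf_snoc_subset[OF assms(1)] y by blast
  qed
qed simp

definition address :: "(nat list \<Rightarrow> 'b set) \<Rightarrow> 'b \<Rightarrow> nat \<Rightarrow> nat" where
  "address l p i = descend l p (Suc i) ! i"

lemma descend_eq_seq_prefix: "descend l p n = seq_prefix (address l p) n"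
  by (induction n) (simp_all add: seq_prefix_Suc address_def nth_append)

lemma mem_leaf_iff_address:
  assumes ls: "locally_strict l"
  shows "s \<in> l x \<longleftrightarrow> s \<in> l [] \<and> seq_prefix (address l s) (length x) = x"
proof
  have in_leaves: "s \<in> l (seq_prefix (address l s) n)" if "s \<in> l []" for n
    using mem_descend[OF ls that] by (simp add: descend_eq_seq_prefix)
  {
    assume s: "s \<in> l x"
    then have "s \<in> l []" using leaf_subset_root[OF ls] by blast
    moreover have "seq_prefix (address l s) (length x) = x"
    proof (rule ccontr)
      assume "seq_prefix (address l s) (length x) \<noteq> x"
      then have "l (seq_prefix (address l s) (length x)) \<inter> l x = {}"
        by (intro leaves_disjoint[OF ls]) simp_all
      then show False using in_leaves[OF \<open>s \<in> l []\<close>] s by blast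
    qed
    ultimately show "s \<in> l [] \<and> seq_prefix (address l s) (length x) = x" ..
  next
    assume s: "s \<in> l [] \<and> seq_prefix (address l s) (length x) = x"
    from in_leaves[OF conjunct1[OF s], of "length x"] show "s \<in> l x"
      unfolding conjunct2[OF s] .
  }
qed

lemma strict_branches_unique_address:
  assumes ls: "locally_strict l" and sb: "strict_branches l"
  shows "\<exists>!p. p \<in> l [] \<and> address l p = f"
proof -
  from sb have "is_branch (range (seq_prefix f)) \<longrightarrow> (\<exists>p. \<Inter> (l ` range (seq_prefix f)) = {p})"
    unfolding strict_branches_def by (rule spec)
  then have "\<exists>p. \<Inter> (l ` range (seq_prefix f)) = {p}"
    using is_branch_range_seq_prefix by (rule mp)
  then obtain p where p: "\<Inter> (l ` range (seq_prefix f)) = {p}" ..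
  have on_branch: "q \<in> \<Inter> (l ` range (seq_prefix f)) \<longleftrightarrow> q \<in> l [] \<and> address l q = f" for q
  proof -
    have "q \<in> l (seq_prefix f n) \<longleftrightarrow> q \<in> l [] \<and> seq_prefix (address l q) n = seq_prefix f n" for n
      using mem_leaf_iff_address[OF ls, of q "seq_prefix f n"] by simp
    then have "q \<in> \<Inter> (l ` range (seq_prefix f)) \<longleftrightarrow>
        q \<in> l [] \<and> (\<forall>n. seq_prefix (address l q) n = seq_prefix f n)"
      by auto
    then show ?thesis by (simp add: seq_prefix_eq_all_iff)
  qed
  show ?thesis
  proof (rule ex1I)
    show "p \<in> l [] \<and> address l p = f" using on_branch[of p] unfolding p by simp
    show "q = p" if "q \<in> l [] \<and> address l q = f" for q using on_branch[of q] that unfolding p by simp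
  qed
qed

lemma baire_foliage_tree_imp_coding:
  assumes T: "baire_foliage_tree X l"
  shows "\<exists>\<phi>. open_coding X \<phi> \<and> l = cylinder \<phi> (topspace X)"
proof -
  have ls: "locally_strict l" and root: "l [] = topspace X" and sb: "strict_branches l"
    and "\<And>x. openin X (l x)"
    using T unfolding baire_foliage_tree_def by simp_all
  have leaf_eq: "l = cylinder (address l) (topspace X)"
    using mem_leaf_iff_address[OF ls] root by (auto simp: mem_cylinder_iff)
  have unique: "\<exists>!p. p \<in> topspace X \<and> address l p = f" for f
    using strict_branches_unique_address[OF ls sb] root by simp
  have "bij_betw (address l) (topspace X) UNIV"
    unfolding bij_betw_def
  proof
    show "inj_on (address l) (topspace X)"
    proof
      fix s t assume "s \<in> topspace X" "t \<in> topspace X" "address l s = address l t"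
      then show "s = t" using unique[of "address l s"] by auto
    qed
    show "address l ` topspace X = UNIV"
    proof (intro set_eqI iffI)
      fix f :: "nat \<Rightarrow> nat"
      obtain p where "p \<in> topspace X \<and> address l p = f" using unique[of f] by auto
      then show "f \<in> address l ` topspace X" by blast
    qed simp
  qed
  moreover have "openin X (cylinder (address l) (topspace X) x)" for x
    using \<open>\<And>x. openin X (l x)\<close>[of x] by (subst (asm) leaf_eq)
  ultimately have "open_coding X (address l)"
    unfolding open_coding_def by blast
  then show ?thesis
  proof (intro exI conjI)
    show "l = cylinder (address l) (topspace X)" by (fact leaf_eq)
  qed
qed

lemma tail_sons_in_shoot: "(\<Union>i\<in>{N..}. l (z @ [i])) \<in> shoot l z"
proof -
  let ?C = "(\<lambda>i. z @ [i]) ` {N..}"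
  have "sons z - ?C \<subseteq> (\<lambda>i. z @ [i]) ` {..<N}"
  proof
    fix y assume "y \<in> sons z - ?C"
    then obtain i where "y = z @ [i]" "\<not> N \<le> i" by (auto simp: sons_eq_range_snoc)
    then show "y \<in> (\<lambda>i. z @ [i]) ` {..<N}" by auto
  qed
  then have "finite (sons z - ?C)" by (rule finite_subset) simp
  moreover have "?C \<subseteq> sons z" by (auto simp: sons_eq_range_snoc)
  ultimately show ?thesis
    unfolding shoot_def by (intro CollectI exI[of _ ?C] conjI) (simp_all add: image_image)
qed

text \<open>\<open>shoot_inside \<phi> S p U n\<close>: for some \<open>N\<close>, the union of the sons \<open>N, N + 1, \<dots>\<close> of the
  node of depth \<open>n\<close> on the branch of \<open>p\<close>, a member of its shoot, lies inside \<open>U\<close>.\<close>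

definition shoot_inside :: "('b \<Rightarrow> nat \<Rightarrow> nat) \<Rightarrow> 'b set \<Rightarrow> 'b \<Rightarrow> 'b set \<Rightarrow> nat \<Rightarrow> bool" where
  "shoot_inside \<phi> S p U n \<longleftrightarrow> (\<exists>N. \<forall>s\<in>S. (\<forall>i<n. \<phi> s i = \<phi> p i) \<and> N \<le> \<phi> s n \<longrightarrow> s \<in> U)"

lemma shoot_insideI:
  assumes "\<And>i. N \<le> i \<Longrightarrow> cylinder \<phi> S (seq_prefix (\<phi> p) n @ [i]) \<subseteq> U"
  shows "shoot_inside \<phi> S p U n"
  unfolding shoot_inside_def
proof (intro exI[of _ N] ballI impI)
  fix s assume "s \<in> S" and s: "(\<forall>i<n. \<phi> s i = \<phi> p i) \<and> N \<le> \<phi> s n"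
  then have "s \<in> cylinder \<phi> S (seq_prefix (\<phi> p) n @ [\<phi> s n])"
    by (simp add: cylinder_snoc mem_cylinder_seq_prefix)
  then show "s \<in> U" using assms s by blast
qed

lemma shoot_inside_mono: "shoot_inside \<phi> S p U n \<Longrightarrow> U \<subseteq> U' \<Longrightarrow> shoot_inside \<phi> S p U' n"
  unfolding shoot_inside_def by blast

definition pi_coding :: "'a topology \<Rightarrow> ('a \<Rightarrow> nat \<Rightarrow> nat) \<Rightarrow> bool" where
  "pi_coding X \<phi> \<longleftrightarrow> open_coding X \<phi> \<and>
     (\<forall>p\<in>topspace X. \<forall>U. is_neighbourhood X p U \<longrightarrow> (\<exists>n. shoot_inside \<phi> (topspace X) p U n))"

lemma grows_into_cylinderI:
  assumes bij: "bij_betw \<phi> (topspace X) UNIV"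
    and shoot: "\<And>p U. p \<in> topspace X \<Longrightarrow> is_neighbourhood X p U \<Longrightarrow>
      \<exists>n. shoot_inside \<phi> (topspace X) p U n"
  shows "grows_into (cylinder \<phi> (topspace X)) X"
  unfolding grows_into_def
proof (intro ballI allI impI)
  let ?S = "topspace X"
  let ?l = "cylinder \<phi> ?S"
  fix p U assume p: "p \<in> ?S" and U: "is_neighbourhood X p U"
  obtain n N where inside: "\<And>s. s \<in> ?S \<Longrightarrow> \<forall>i<n. \<phi> s i = \<phi> p i \<Longrightarrow> N \<le> \<phi> s n \<Longrightarrow> s \<in> U"
    using shoot[OF p U] unfolding shoot_inside_def by blast
  let ?z = "seq_prefix (\<phi> p) n"
  let ?C = "(\<lambda>i. ?z @ [i]) ` {N..}"
  have "?z \<in> scope ?l p" using p by (simp add: scope_def mem_cylinder_seq_prefix)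
  have "\<Union> (?l ` ?C) \<in> shoot ?l ?z"
    using tail_sons_in_shoot[of ?l ?z N] by (simp add: image_image)
  moreover obtain s where s: "s \<in> ?S" "\<phi> s = (\<phi> p)(n := N)"
    using bij_betw_imp_surj_on[OF bij] by (rule image_eq_UNIV_preimageE)
  then have "s \<in> ?l (?z @ [N])" by (simp add: cylinder_snoc mem_cylinder_seq_prefix)
  then have "s \<in> \<Union> (?l ` ?C)" by blast
  moreover have "\<Union> (?l ` ?C) \<subseteq> U"
  proof
    fix s assume "s \<in> \<Union> (?l ` ?C)"
    then obtain i where "N \<le> i" "s \<in> ?l (?z @ [i])" by auto
    then have "s \<in> ?S" "\<forall>j<n. \<phi> s j = \<phi> p j" "N \<le> \<phi> s n"
      by (simp_all add: cylinder_snoc mem_cylinder_seq_prefix)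
    then show "s \<in> U" by (rule inside)
  qed
  ultimately have "shoot ?l ?z \<ggreater> {U}"
    unfolding gg_def by (metis empty_iff singletonD)
  with \<open>?z \<in> scope ?l p\<close> show "\<exists>z\<in>scope ?l p. shoot ?l z \<ggreater> {U}" ..
qed

lemma grows_into_cylinderD:
  assumes "grows_into (cylinder \<phi> (topspace X)) X" "p \<in> topspace X" "is_neighbourhood X p U"
  shows "\<exists>n. shoot_inside \<phi> (topspace X) p U n"
proof -
  let ?S = "topspace X"
  let ?l = "cylinder \<phi> ?S"
  obtain z where z: "z \<in> scope ?l p" and sh: "shoot ?l z \<ggreater> {U}"
    using assms unfolding grows_into_def by blast
  have "p \<in> U" using assms(3) unfolding is_neighbourhood_def by auto
  then obtain G where "G \<in> shoot ?l z" "G \<subseteq> U"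
    using sh unfolding gg_def by auto
  then obtain C where C: "\<Union> (?l ` C) \<subseteq> U" "C \<subseteq> sons z" "finite (sons z - C)"
    unfolding shoot_def by auto
  have "finite ((\<lambda>i. z @ [i]) -` (sons z - C))"
    using C(3) by (rule finite_vimageI) (simp add: inj_on_def)
  then obtain N where "(\<lambda>i. z @ [i]) -` (sons z - C) \<subseteq> {..<N}"
    using finite_nat_bounded by blast
  then have N: "\<And>i. z @ [i] \<in> sons z - C \<Longrightarrow> i < N" by auto
  have zp: "\<forall>i<length z. \<phi> p i = z ! i" using z unfolding scope_def cylinder_def by simp
  have "s \<in> U" if "s \<in> ?S" "\<forall>i<length z. \<phi> s i = \<phi> p i" "N \<le> \<phi> s (length z)" for s
  proof -
    have "z @ [\<phi> s (length z)] \<in> C"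
      using N[of "\<phi> s (length z)"] that(3) by (auto simp: sons_eq_range_snoc)
    moreover have "s \<in> ?l (z @ [\<phi> s (length z)])"
      using that(1,2) zp unfolding cylinder_snoc by (simp add: cylinder_def)
    ultimately show "s \<in> U" using C(1) by blast
  qed
  then show ?thesis unfolding shoot_inside_def by blast
qed

lemma has_pi_tree_iff_pi_coding: "has_pi_tree X \<longleftrightarrow> (\<exists>\<phi>. pi_coding X \<phi>)"
proof
  assume "has_pi_tree X"
  then obtain l where l: "baire_foliage_tree X l" "grows_into l X"
    unfolding has_pi_tree_def pi_tree_def by auto
  obtain \<phi> where \<phi>: "open_coding X \<phi>" "l = cylinder \<phi> (topspace X)"
    using baire_foliage_tree_imp_coding[OF l(1)] by auto
  have "pi_coding X \<phi>"
    unfolding pi_coding_def using \<phi> grows_into_cylinderD[of \<phi> X] l(2) by simp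
  then show "\<exists>\<phi>. pi_coding X \<phi>" by blast
next
  assume "\<exists>\<phi>. pi_coding X \<phi>"
  then obtain \<phi> where \<phi>: "open_coding X \<phi>"
    and shoot: "\<And>p U. p \<in> topspace X \<Longrightarrow> is_neighbourhood X p U \<Longrightarrow>
      \<exists>n. shoot_inside \<phi> (topspace X) p U n"
    unfolding pi_coding_def by auto
  have "pi_tree X (cylinder \<phi> (topspace X))"
    unfolding pi_tree_def using baire_foliage_tree_cylinder[OF \<phi>] grows_into_cylinderI[OF _ shoot] \<phi>
    by (simp add: open_coding_def)
  then show "has_pi_tree X" unfolding has_pi_tree_def by blast
qed

text \<open>Shrinking \<open>U\<close> to the cylinder of depth \<open>K\<close> around \<open>p\<close> forces the level to be at least \<open>K\<close>.\<close>

lemma pi_coding_shoot_inside_deep: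
  assumes \<phi>: "pi_coding X \<phi>" and p: "p \<in> topspace X" and U: "is_neighbourhood X p U"
  shows "\<exists>n\<ge>K. shoot_inside \<phi> (topspace X) p U n"
proof -
  let ?S = "topspace X"
  let ?L = "cylinder \<phi> ?S (seq_prefix (\<phi> p) K)"
  have bij: "bij_betw \<phi> ?S UNIV" and "openin X ?L"
    using \<phi> by (auto simp: pi_coding_def open_coding_def)
  moreover have "p \<in> ?L" using p by (simp add: mem_cylinder_seq_prefix)
  ultimately have "is_neighbourhood X p (U \<inter> ?L)"
    using U unfolding is_neighbourhood_def by (auto intro: openin_Int)
  then obtain n N where inside: "\<And>s. s \<in> ?S \<Longrightarrow> \<forall>i<n. \<phi> s i = \<phi> p i \<Longrightarrow> N \<le> \<phi> s n \<Longrightarrow> s \<in> U \<inter> ?L"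
    using \<phi> p unfolding pi_coding_def shoot_inside_def by blast
  have "K \<le> n"
  proof (rule ccontr)
    assume "\<not> K \<le> n"
    obtain s where s: "s \<in> ?S" "\<phi> s = (\<phi> p)(n := max N (Suc (\<phi> p n)))"
      using bij_betw_imp_surj_on[OF bij] by (rule image_eq_UNIV_preimageE)
    then have "s \<in> ?L" using inside[of s] by simp
    then have "\<forall>i<K. \<phi> s i = \<phi> p i" by (simp add: mem_cylinder_seq_prefix)
    then have "\<phi> s n = \<phi> p n" using \<open>\<not> K \<le> n\<close> by simp
    with s(2) show False by simp
  qed
  moreover have "shoot_inside \<phi> ?S p U n"
    unfolding shoot_inside_def using inside by blast
  ultimately show ?thesis by blast
qed

definition deep_growth :: "'a topology \<Rightarrow> ('a \<Rightarrow> nat \<Rightarrow> nat) \<Rightarrow> (nat \<Rightarrow> nat) \<Rightarrow> bool" where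
  "deep_growth Y \<gamma> lv \<longleftrightarrow> (\<forall>q\<in>topspace Y. \<forall>U. is_neighbourhood Y q U \<longrightarrow>
     (\<exists>M. \<forall>n\<ge>M. shoot_inside \<gamma> (topspace Y) q U (lv n)))"

lemma deep_growth_double: "deep_growth Y \<gamma> id \<Longrightarrow> deep_growth Y \<gamma> (\<lambda>n. 2 * n)"
  unfolding deep_growth_def by (metis id_apply le_trans mult_2 le_add1)

section \<open>Coding sequences of finite blocks\<close>

text \<open>Tuples have length at least two, so that every fibre is infinite and \<open>tuple_code\<close>
  reaches every pair.\<close>

definition min_fibre :: "nat \<Rightarrow> nat \<Rightarrow> nat list set" where
  "min_fibre k t = {xs. length xs = Suc (Suc k) \<and> Min (set xs) = t}"

lemma infinite_min_fibre: "infinite (min_fibre k t)"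
proof -
  have "(\<lambda>m. t # (t + m) # replicate k t) ` UNIV \<subseteq> min_fibre k t"
    by (auto simp: min_fibre_def intro!: Min_eqI)
  moreover have "inj (\<lambda>m. t # (t + m) # replicate k t)"
    by (auto simp: inj_def)
  ultimately show ?thesis
    using finite_subset range_inj_infinite by blast
qed

definition tuple_code :: "nat \<Rightarrow> nat list \<Rightarrow> nat \<times> nat" where
  "tuple_code k xs = (Min (set xs), to_nat_on (min_fibre k (Min (set xs))) xs)"

definition tuple_decode :: "nat \<Rightarrow> nat \<times> nat \<Rightarrow> nat list" where
  "tuple_decode k v = from_nat_into (min_fibre k (fst v)) (snd v)"

lemma tuple_decode_in_min_fibre: "tuple_decode k v \<in> min_fibre k (fst v)"
  unfolding tuple_decode_def using infinite_min_fibre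
  by (metis finite.emptyI from_nat_into)

lemma tuple_code_decode [simp]: "tuple_code k (tuple_decode k v) = v"
proof -
  have "Min (set (tuple_decode k v)) = fst v"
    using tuple_decode_in_min_fibre[of k v] by (simp add: min_fibre_def)
  moreover have "to_nat_on (min_fibre k (fst v)) (tuple_decode k v) = snd v"
    unfolding tuple_decode_def using infinite_min_fibre by simp
  ultimately show ?thesis by (simp add: tuple_code_def)
qed

lemma tuple_code_inj:
  assumes "length xs = Suc (Suc k)" "length ys = Suc (Suc k)" "tuple_code k xs = tuple_code k ys"
  shows "xs = ys"
proof -
  have "xs \<in> min_fibre k (Min (set xs))" "ys \<in> min_fibre k (Min (set ys))"
    using assms(1,2) by (simp_all add: min_fibre_def)
  moreover have "countable (min_fibre k t)" for t by simp
  ultimately show ?thesis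
    using assms(3) by (auto simp: tuple_code_def)
qed

lemma fst_tuple_code_le: "x \<in> set xs \<Longrightarrow> fst (tuple_code k xs) \<le> x"
  by (simp add: tuple_code_def)

definition interleave :: "(nat \<Rightarrow> nat \<times> nat) \<Rightarrow> nat \<Rightarrow> nat" where
  "interleave h m = (if even m then fst (h (m div 2)) else snd (h (m div 2)))"

definition block_code :: "(nat \<Rightarrow> nat) \<Rightarrow> (nat \<Rightarrow> nat list) \<Rightarrow> nat \<Rightarrow> nat" where
  "block_code k B = interleave (\<lambda>n. tuple_code (k n) (B n))"

lemma block_code_even: "block_code k B (2 * n) = fst (tuple_code (k n) (B n))"
  by (simp add: block_code_def interleave_def)

lemma block_code_odd: "block_code k B (Suc (2 * n)) = snd (tuple_code (k n) (B n))"
  by (simp add: block_code_def interleave_def)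

lemma block_code_le: "x \<in> set (B n) \<Longrightarrow> block_code k B (2 * n) \<le> x"
  by (simp add: block_code_even fst_tuple_code_le)

lemma block_code_eq_blocks:
  assumes "\<forall>i<2 * n. block_code k B i = block_code k B' i" "j < n"
    and "length (B j) = Suc (Suc (k j))" "length (B' j) = Suc (Suc (k j))"
  shows "B j = B' j"
proof (rule tuple_code_inj[OF assms(3,4)])
  have "2 * j < 2 * n" "Suc (2 * j) < 2 * n" using assms(2) by simp_all
  then show "tuple_code (k j) (B j) = tuple_code (k j) (B' j)"
    using assms(1) by (metis block_code_even block_code_odd prod.expand)
qed

lemma block_code_eq_if_blocks:
  "(\<And>j. j < n \<Longrightarrow> B j = B' j) \<Longrightarrow> i < 2 * n \<Longrightarrow> block_code k B i = block_code k B' i"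
  by (simp add: block_code_def interleave_def)

lemma block_code_decode:
  "block_code k (\<lambda>n. tuple_decode (k n) (g (2 * n), g (Suc (2 * n)))) = g"
proof
  fix m
  show "block_code k (\<lambda>n. tuple_decode (k n) (g (2 * n), g (Suc (2 * n)))) m = g m"
    by (cases "even m") (auto simp: block_code_def interleave_def elim!: evenE oddE)
qed

section \<open>Products with a deeply growing factor\<close>

definition prod_block :: "('a \<Rightarrow> nat \<Rightarrow> nat) \<Rightarrow> ('b \<Rightarrow> nat \<Rightarrow> nat) \<Rightarrow> 'a \<times> 'b \<Rightarrow> nat \<Rightarrow> nat list" where
  "prod_block \<phi> \<gamma> z n = [\<phi> (fst z) n, \<gamma> (snd z) (2 * n), \<gamma> (snd z) (Suc (2 * n))]"

definition prod_code :: "('a \<Rightarrow> nat \<Rightarrow> nat) \<Rightarrow> ('b \<Rightarrow> nat \<Rightarrow> nat) \<Rightarrow> 'a \<times> 'b \<Rightarrow> nat \<Rightarrow> nat" where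
  "prod_code \<phi> \<gamma> z = block_code (\<lambda>_. 1) (prod_block \<phi> \<gamma> z)"

lemma below_double_cases:
  assumes "i < 2 * n"
  obtains j where "j < n" "i = 2 * j \<or> i = Suc (2 * j)"
  using assms by (intro that[of "i div 2"]) auto

lemma prod_code_prefix_eq_iff:
  "(\<forall>i<2 * n. prod_code \<phi> \<gamma> z i = prod_code \<phi> \<gamma> z' i) \<longleftrightarrow>
     (\<forall>i<n. \<phi> (fst z) i = \<phi> (fst z') i) \<and> (\<forall>i<2 * n. \<gamma> (snd z) i = \<gamma> (snd z') i)"
    (is "?codes \<longleftrightarrow> ?coordinates")
proof -
  have "?codes \<longleftrightarrow> (\<forall>j<n. prod_block \<phi> \<gamma> z j = prod_block \<phi> \<gamma> z' j)"
  proof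
    assume ?codes
    show "\<forall>j<n. prod_block \<phi> \<gamma> z j = prod_block \<phi> \<gamma> z' j"
    proof (intro allI impI)
      fix j assume "j < n"
      with \<open>?codes\<close> show "prod_block \<phi> \<gamma> z j = prod_block \<phi> \<gamma> z' j"
        unfolding prod_code_def by (rule block_code_eq_blocks) (simp_all add: prod_block_def)
    qed
  next
    assume "\<forall>j<n. prod_block \<phi> \<gamma> z j = prod_block \<phi> \<gamma> z' j"
    then show ?codes
      unfolding prod_code_def using block_code_eq_if_blocks by blast
  qed
  also have "\<dots> \<longleftrightarrow> ?coordinates"
    by (auto simp: prod_block_def elim!: below_double_cases)
  finally show ?thesis .
qed

lemma inj_on_prod_code:
  assumes \<phi>: "inj_on \<phi> S" and \<gamma>: "inj_on \<gamma> T"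
  shows "inj_on (prod_code \<phi> \<gamma>) (S \<times> T)"
proof
  fix z z' assume z: "z \<in> S \<times> T" "z' \<in> S \<times> T" and eq: "prod_code \<phi> \<gamma> z = prod_code \<phi> \<gamma> z'"
  have agree: "(\<forall>i<n. \<phi> (fst z) i = \<phi> (fst z') i) \<and> (\<forall>i<2 * n. \<gamma> (snd z) i = \<gamma> (snd z') i)" for n
    using eq by (simp add: prod_code_prefix_eq_iff[symmetric])
  have "\<phi> (fst z) i = \<phi> (fst z') i" "\<gamma> (snd z) i = \<gamma> (snd z') i" for i
    using agree[of "Suc i"] by simp_all
  then have "\<phi> (fst z) = \<phi> (fst z')" "\<gamma> (snd z) = \<gamma> (snd z')"
    by (simp_all add: fun_eq_iff)
  then have "fst z = fst z'" "snd z = snd z'"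
    using z inj_onD[OF \<phi>] inj_onD[OF \<gamma>] by (simp_all add: mem_Times_iff)
  then show "z = z'" by (simp add: prod_eq_iff)
qed

lemma prod_code_image_eq_UNIV:
  assumes \<phi>: "\<phi> ` S = UNIV" and \<gamma>: "\<gamma> ` T = UNIV"
  shows "prod_code \<phi> \<gamma> ` (S \<times> T) = UNIV"
proof (intro set_eqI iffI)
  fix g :: "nat \<Rightarrow> nat"
  define L where "L n = tuple_decode 1 (g (2 * n), g (Suc (2 * n)))" for n
  obtain p where p: "p \<in> S" "\<phi> p = (\<lambda>n. L n ! 0)"
    using \<phi> by (rule image_eq_UNIV_preimageE)
  obtain q where q: "q \<in> T" "\<gamma> q = (\<lambda>m. L (m div 2) ! (if even m then 1 else 2))"
    using \<gamma> by (rule image_eq_UNIV_preimageE)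
  have "prod_block \<phi> \<gamma> (p, q) n = L n" for n
  proof (rule nth_equalityI)
    have "length (L n) = 3"
      using tuple_decode_in_min_fibre[of 1] by (simp add: L_def min_fibre_def)
    then show "length (prod_block \<phi> \<gamma> (p, q) n) = length (L n)"
      by (simp add: prod_block_def)
    fix i assume "i < length (prod_block \<phi> \<gamma> (p, q) n)"
    then have "i = 0 \<or> i = 1 \<or> i = 2" by (auto simp: prod_block_def)
    then show "prod_block \<phi> \<gamma> (p, q) n ! i = L n ! i"
      using p q by (auto simp: prod_block_def)
  qed
  then have "prod_block \<phi> \<gamma> (p, q) = (\<lambda>n. tuple_decode 1 (g (2 * n), g (Suc (2 * n))))"
    by (simp add: L_def fun_eq_iff)
  then have "prod_code \<phi> \<gamma> (p, q) = g"
    unfolding prod_code_def using block_code_decode[of "\<lambda>_. 1" g] by simp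
  with p q show "g \<in> prod_code \<phi> \<gamma> ` (S \<times> T)" by force
qed simp

lemma bij_betw_prod_code:
  "bij_betw \<phi> S UNIV \<Longrightarrow> bij_betw \<gamma> T UNIV \<Longrightarrow> bij_betw (prod_code \<phi> \<gamma>) (S \<times> T) UNIV"
  by (simp add: bij_betw_def inj_on_prod_code prod_code_image_eq_UNIV)

lemma openin_prod_code_cylinder:
  assumes "open_coding X \<phi>" "open_coding Y \<gamma>"
  shows "openin (prod_topology X Y) (cylinder (prod_code \<phi> \<gamma>) (topspace (prod_topology X Y)) x)"
    (is "openin _ ?L")
proof (subst openin_subopen, intro ballI)
  let ?K = "length x"
  fix z0 assume z0: "z0 \<in> ?L"
  obtain s0 r0 where z0_eq: "z0 = (s0, r0)" by (cases z0)
  let ?B = "cylinder \<phi> (topspace X) (seq_prefix (\<phi> s0) ?K) \<times>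
    cylinder \<gamma> (topspace Y) (seq_prefix (\<gamma> r0) (2 * ?K))"
  have "openin (prod_topology X Y) ?B"
    using assms by (simp add: openin_prod_Times_iff open_coding_def)
  moreover have "z0 \<in> ?B" using z0 z0_eq by (simp add: cylinder_def mem_cylinder_seq_prefix)
  moreover have "?B \<subseteq> ?L"
  proof
    fix z assume "z \<in> ?B"
    then have "z \<in> topspace (prod_topology X Y)"
      and "\<forall>i<2 * ?K. prod_code \<phi> \<gamma> z i = prod_code \<phi> \<gamma> z0 i"
      using z0_eq by (auto simp: mem_cylinder_seq_prefix prod_code_prefix_eq_iff)
    then show "z \<in> ?L" using z0 unfolding cylinder_def by auto
  qed
  ultimately show "\<exists>T. openin (prod_topology X Y) T \<and> z0 \<in> T \<and> T \<subseteq> ?L" by blast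
qed

lemma prod_code_shoot_inside:
  assumes \<phi>: "pi_coding X \<phi>" and \<gamma>: "deep_growth Y \<gamma> (\<lambda>n. 2 * n)"
    and z: "z \<in> topspace (prod_topology X Y)" and W: "is_neighbourhood (prod_topology X Y) z W"
  shows "\<exists>n. shoot_inside (prod_code \<phi> \<gamma>) (topspace (prod_topology X Y)) z W n"
proof -
  obtain p q where z_eq: "z = (p, q)" and p: "p \<in> topspace X" and q: "q \<in> topspace Y"
    using z by (cases z) auto
  obtain V where "openin (prod_topology X Y) V" "z \<in> V" "V \<subseteq> W"
    using W unfolding is_neighbourhood_def by auto
  then obtain U1 U2 where U: "openin X U1" "openin Y U2" "p \<in> U1" "q \<in> U2" "U1 \<times> U2 \<subseteq> W"
    unfolding openin_prod_topology_alt z_eq by (meson order_trans)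
  have "is_neighbourhood X p U1" "is_neighbourhood Y q U2"
    using U by (auto simp: is_neighbourhood_def dest: openin_subset)
  obtain M where M: "\<And>n. M \<le> n \<Longrightarrow> shoot_inside \<gamma> (topspace Y) q U2 (2 * n)"
    using \<gamma> q \<open>is_neighbourhood Y q U2\<close> unfolding deep_growth_def by blast
  obtain n where "M \<le> n" and "shoot_inside \<phi> (topspace X) p U1 n"
    using pi_coding_shoot_inside_deep[OF \<phi> p \<open>is_neighbourhood X p U1\<close>, of M] by blast
  then obtain N1
    where N1: "\<And>s. s \<in> topspace X \<Longrightarrow> \<forall>i<n. \<phi> s i = \<phi> p i \<Longrightarrow> N1 \<le> \<phi> s n \<Longrightarrow> s \<in> U1"
    unfolding shoot_inside_def by blast
  obtain N2
    where N2: "\<And>r. r \<in> topspace Y \<Longrightarrow> \<forall>i<2 * n. \<gamma> r i = \<gamma> q i \<Longrightarrow> N2 \<le> \<gamma> r (2 * n) \<Longrightarrow> r \<in> U2"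
    using M[OF \<open>M \<le> n\<close>] unfolding shoot_inside_def by blast
  have "w \<in> W" if w: "w \<in> topspace (prod_topology X Y)"
    and agree: "\<forall>i<2 * n. prod_code \<phi> \<gamma> w i = prod_code \<phi> \<gamma> z i"
    and large: "max N1 N2 \<le> prod_code \<phi> \<gamma> w (2 * n)" for w
  proof -
    obtain s r where w_eq: "w = (s, r)" by (cases w)
    have "\<forall>i<n. \<phi> s i = \<phi> p i" "\<forall>i<2 * n. \<gamma> r i = \<gamma> q i"
      using agree w_eq z_eq by (simp_all add: prod_code_prefix_eq_iff)
    moreover have "prod_code \<phi> \<gamma> w (2 * n) \<le> \<phi> s n" "prod_code \<phi> \<gamma> w (2 * n) \<le> \<gamma> r (2 * n)"
      unfolding prod_code_def w_eq by (rule block_code_le, simp add: prod_block_def)+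
    ultimately have "s \<in> U1" "r \<in> U2"
      using N1[of s] N2[of r] w w_eq large by auto
    then show "w \<in> W" using U(5) w_eq by auto
  qed
  then show ?thesis unfolding shoot_inside_def by blast
qed

lemma pi_coding_prod:
  assumes "pi_coding X \<phi>" "open_coding Y \<gamma>" "deep_growth Y \<gamma> (\<lambda>n. 2 * n)"
  shows "pi_coding (prod_topology X Y) (prod_code \<phi> \<gamma>)"
  unfolding pi_coding_def open_coding_def
proof (intro conjI allI ballI impI)
  show "bij_betw (prod_code \<phi> \<gamma>) (topspace (prod_topology X Y)) UNIV"
    using assms(1,2) by (simp add: pi_coding_def open_coding_def bij_betw_prod_code)
  show "openin (prod_topology X Y) (cylinder (prod_code \<phi> \<gamma>) (topspace (prod_topology X Y)) x)" for x
    using assms(1,2) unfolding pi_coding_def by (intro openin_prod_code_cylinder) simp_all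
qed (rule prod_code_shoot_inside[OF assms(1,3)])

section \<open>Countable powers of a deeply growing space\<close>

text \<open>Block \<open>n\<close> collects depth \<open>n + 1 - i\<close> of coordinate \<open>i \<le> n + 1\<close>, except that
  coordinates \<open>0\<close> and \<open>1\<close> both contribute depth \<open>n\<close> (truncated subtraction); so depth \<open>j\<close> of
  coordinate \<open>i\<close> is stored exactly once, in block \<open>j + (i - 1)\<close>.\<close>

definition power_block :: "('z \<Rightarrow> nat \<Rightarrow> nat) \<Rightarrow> (nat \<Rightarrow> 'z) \<Rightarrow> nat \<Rightarrow> nat list" where
  "power_block \<gamma> q n = map (\<lambda>i. \<gamma> (q i) (n - (i - 1))) [0..<Suc (Suc n)]"

definition power_code :: "('z \<Rightarrow> nat \<Rightarrow> nat) \<Rightarrow> (nat \<Rightarrow> 'z) \<Rightarrow> nat \<Rightarrow> nat" where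
  "power_code \<gamma> q = block_code (\<lambda>n. n) (power_block \<gamma> q)"

lemma length_power_block [simp]: "length (power_block \<gamma> q n) = Suc (Suc n)"
  by (simp add: power_block_def)

lemma nth_power_block: "i < Suc (Suc n) \<Longrightarrow> power_block \<gamma> q n ! i = \<gamma> (q i) (n - (i - 1))"
  unfolding power_block_def by (simp del: upt_Suc add: nth_map_upt)

lemma power_code_le: "i < Suc (Suc n) \<Longrightarrow> power_code \<gamma> q (2 * n) \<le> \<gamma> (q i) (n - (i - 1))"
  unfolding power_code_def using block_code_le nth_mem nth_power_block
  by (metis length_power_block)

lemma power_code_prefix_eqD:
  assumes "\<forall>m<2 * n. power_code \<gamma> q m = power_code \<gamma> q' m" "j + (i - 1) < n"
  shows "\<gamma> (q i) j = \<gamma> (q' i) j"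
proof -
  have "power_block \<gamma> q (j + (i - 1)) = power_block \<gamma> q' (j + (i - 1))"
    using assms unfolding power_code_def by (intro block_code_eq_blocks) simp_all
  then have "power_block \<gamma> q (j + (i - 1)) ! i = power_block \<gamma> q' (j + (i - 1)) ! i"
    by simp
  then show ?thesis by (simp add: nth_power_block)
qed

lemma power_code_prefix_eqI:
  assumes "\<And>i j. i \<le> K \<Longrightarrow> j < K \<Longrightarrow> \<gamma> (q i) j = \<gamma> (q' i) j" "m < 2 * K"
  shows "power_code \<gamma> q m = power_code \<gamma> q' m"
  unfolding power_code_def
proof (rule block_code_eq_if_blocks[OF _ assms(2)])
  fix n assume "n < K"
  then show "power_block \<gamma> q n = power_block \<gamma> q' n"
    by (intro nth_equalityI) (auto simp: nth_power_block intro!: assms(1))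
qed

lemma inj_on_power_code:
  assumes \<gamma>: "inj_on \<gamma> T"
  shows "inj_on (power_code \<gamma>) (\<Pi>\<^sub>E i\<in>UNIV. T)"
proof
  fix q q' assume q: "q \<in> (\<Pi>\<^sub>E i\<in>UNIV. T)" "q' \<in> (\<Pi>\<^sub>E i\<in>UNIV. T)"
    and eq: "power_code \<gamma> q = power_code \<gamma> q'"
  have "\<gamma> (q i) j = \<gamma> (q' i) j" for i j
    using eq by (intro power_code_prefix_eqD[where n = "Suc (j + (i - 1))"]) simp_all
  then have "\<gamma> (q i) = \<gamma> (q' i)" for i by (simp add: fun_eq_iff)
  moreover have "q i \<in> T" "q' i \<in> T" for i using q by auto
  ultimately show "q = q'"
    using inj_onD[OF \<gamma>] by (simp add: fun_eq_iff)
qed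

lemma power_code_image_eq_UNIV:
  assumes \<gamma>: "\<gamma> ` T = UNIV"
  shows "power_code \<gamma> ` (\<Pi>\<^sub>E i\<in>UNIV. T) = UNIV"
proof (intro set_eqI iffI)
  fix g :: "nat \<Rightarrow> nat"
  define L where "L n = tuple_decode n (g (2 * n), g (Suc (2 * n)))" for n
  have "\<forall>i. \<exists>r. r \<in> T \<and> \<gamma> r = (\<lambda>j. L (j + (i - 1)) ! i)"
    using \<gamma> by (metis image_eq_UNIV_preimageE)
  then obtain q where q: "\<And>i. q i \<in> T" "\<And>i. \<gamma> (q i) = (\<lambda>j. L (j + (i - 1)) ! i)"
    by metis
  have "power_block \<gamma> q n = L n" for n
  proof (rule nth_equalityI)
    show "length (power_block \<gamma> q n) = length (L n)"
      using tuple_decode_in_min_fibre[of n] by (simp add: L_def min_fibre_def)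
    fix i assume "i < length (power_block \<gamma> q n)"
    then show "power_block \<gamma> q n ! i = L n ! i"
      by (simp add: nth_power_block q(2))
  qed
  then have "power_block \<gamma> q = (\<lambda>n. tuple_decode n (g (2 * n), g (Suc (2 * n))))"
    by (simp add: L_def fun_eq_iff)
  then have "power_code \<gamma> q = g"
    unfolding power_code_def using block_code_decode[of "\<lambda>n. n" g] by simp
  with q(1) show "g \<in> power_code \<gamma> ` (\<Pi>\<^sub>E i\<in>UNIV. T)" by force
qed simp

lemma bij_betw_power_code:
  "bij_betw \<gamma> T UNIV \<Longrightarrow> bij_betw (power_code \<gamma>) (\<Pi>\<^sub>E i\<in>UNIV. T) UNIV"
  by (simp add: bij_betw_def inj_on_power_code power_code_image_eq_UNIV)

lemma openin_power_code_cylinder: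
  assumes "open_coding Z \<gamma>"
  shows "openin (product_topology (\<lambda>_. Z) UNIV)
    (cylinder (power_code \<gamma>) (topspace (product_topology (\<lambda>_. Z) UNIV)) x)"
    (is "openin ?Y ?L")
proof (subst openin_subopen, intro ballI)
  let ?K = "length x"
  fix q0 assume q0: "q0 \<in> ?L"
  define B where "B i = (if i \<le> ?K then cylinder \<gamma> (topspace Z) (seq_prefix (\<gamma> (q0 i)) ?K)
    else topspace Z)" for i
  have "openin ?Y (\<Pi>\<^sub>E i\<in>UNIV. B i)"
  proof (rule product_topology_basis)
    show "openin Z (B i)" for i using assms by (simp add: B_def open_coding_def)
    have "{i. B i \<noteq> topspace Z} \<subseteq> {..?K}" by (auto simp: B_def)
    then show "finite {i. B i \<noteq> topspace Z}" using finite_subset by blast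
  qed
  moreover have "q0 \<in> (\<Pi>\<^sub>E i\<in>UNIV. B i)"
    using q0 by (auto simp: B_def cylinder_def mem_cylinder_seq_prefix)
  moreover have "(\<Pi>\<^sub>E i\<in>UNIV. B i) \<subseteq> ?L"
  proof
    fix q assume "q \<in> (\<Pi>\<^sub>E i\<in>UNIV. B i)"
    then have q: "q i \<in> B i" for i by auto
    then have "q \<in> topspace ?Y"
      using cylinder_subset by (fastforce simp: B_def split: if_splits)
    moreover have "\<gamma> (q i) j = \<gamma> (q0 i) j" if "i \<le> ?K" "j < ?K" for i j
      using q[of i] that by (simp add: B_def mem_cylinder_seq_prefix)
    then have "power_code \<gamma> q m = power_code \<gamma> q0 m" if "m < ?K" for m
      using that by (intro power_code_prefix_eqI[where K = ?K]) simp_all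
    ultimately show "q \<in> ?L" using q0 unfolding cylinder_def by auto
  qed
  ultimately show "\<exists>T. openin ?Y T \<and> q0 \<in> T \<and> T \<subseteq> ?L" by blast
qed

lemma power_code_shoot_inside_box:
  assumes q: "q \<in> (\<Pi>\<^sub>E i\<in>UNIV. T)" and "K \<le> n" and B: "\<And>i. K \<le> i \<Longrightarrow> B i = T"
    and shoot: "\<And>i. i < K \<Longrightarrow> shoot_inside \<gamma> T (q i) (B i) (n - (i - 1))"
  shows "shoot_inside (power_code \<gamma>) (\<Pi>\<^sub>E i\<in>UNIV. T) q (\<Pi>\<^sub>E i\<in>UNIV. B i) (2 * n)"
proof -
  have "\<forall>i\<in>{..<K}. \<exists>N. \<forall>s\<in>T. (\<forall>j<n - (i - 1). \<gamma> s j = \<gamma> (q i) j) \<and> N \<le> \<gamma> s (n - (i - 1)) \<longrightarrow> s \<in> B i"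
    using shoot unfolding shoot_inside_def by simp
  then obtain Nf where Nf: "\<And>i s. i < K \<Longrightarrow> s \<in> T \<Longrightarrow> \<forall>j<n - (i - 1). \<gamma> s j = \<gamma> (q i) j \<Longrightarrow>
      Nf i \<le> \<gamma> s (n - (i - 1)) \<Longrightarrow> s \<in> B i"
    by (subst (asm) bchoice_iff) auto
  have "w \<in> (\<Pi>\<^sub>E i\<in>UNIV. B i)" if w: "w \<in> (\<Pi>\<^sub>E i\<in>UNIV. T)"
    and agree: "\<forall>m<2 * n. power_code \<gamma> w m = power_code \<gamma> q m"
    and large: "(\<Sum>i<K. Nf i) \<le> power_code \<gamma> w (2 * n)" for w
  proof -
    have "w i \<in> B i" for i
    proof (cases "i < K")
      case True
      have "\<gamma> (w i) j = \<gamma> (q i) j" if "j < n - (i - 1)" for j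
        using agree that by (intro power_code_prefix_eqD[where n = n]) simp_all
      moreover have "Nf i \<le> (\<Sum>i<K. Nf i)" using True by (intro member_le_sum) simp_all
      moreover have "power_code \<gamma> w (2 * n) \<le> \<gamma> (w i) (n - (i - 1))"
        using True \<open>K \<le> n\<close> by (intro power_code_le) simp
      ultimately show ?thesis
        using Nf[OF True, of "w i"] w large by auto
    qed (use w B in auto)
    then show ?thesis by auto
  qed
  then show ?thesis unfolding shoot_inside_def by blast
qed

lemma deep_growth_power:
  assumes \<gamma>: "deep_growth Z \<gamma> id"
  shows "deep_growth (product_topology (\<lambda>_. Z) UNIV) (power_code \<gamma>) (\<lambda>n. 2 * n)"
  unfolding deep_growth_def
proof (intro ballI allI impI)
  let ?Y = "product_topology (\<lambda>_::nat. Z) UNIV"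
  let ?T = "topspace Z"
  fix q W assume q: "q \<in> topspace ?Y" and W: "is_neighbourhood ?Y q W"
  obtain V where V: "openin ?Y V" "q \<in> V" "V \<subseteq> W" using W unfolding is_neighbourhood_def by auto
  obtain B where B: "q \<in> (\<Pi>\<^sub>E i\<in>UNIV. B i)" "\<And>i. openin Z (B i)" "finite {i. B i \<noteq> ?T}"
      "(\<Pi>\<^sub>E i\<in>UNIV. B i) \<subseteq> V"
    using product_topology_open_contains_basis[OF V(1) V(2)] by auto
  obtain K where K: "{i. B i \<noteq> ?T} \<subseteq> {..<K}" using finite_nat_bounded[OF B(3)] by auto
  have "is_neighbourhood Z (q i) (B i)" for i
    using B(1,2) by (auto simp: is_neighbourhood_def dest: openin_subset)
  moreover have "q i \<in> ?T" for i using q by auto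
  ultimately have "\<forall>i. \<exists>M. \<forall>d\<ge>M. shoot_inside \<gamma> ?T (q i) (B i) d"
    using \<gamma> unfolding deep_growth_def by simp
  then obtain Md where Md: "\<And>i d. Md i \<le> d \<Longrightarrow> shoot_inside \<gamma> ?T (q i) (B i) d"
    by metis
  show "\<exists>M. \<forall>n\<ge>M. shoot_inside (power_code \<gamma>) (topspace ?Y) q W (2 * n)"
  proof (intro exI allI impI)
    fix n assume n: "K + (\<Sum>i<K. Md i) \<le> n"
    have "shoot_inside \<gamma> ?T (q i) (B i) (n - (i - 1))" if "i < K" for i
    proof (rule Md)
      have "Md i \<le> (\<Sum>i<K. Md i)" using that by (intro member_le_sum) simp_all
      then show "Md i \<le> n - (i - 1)" using n that by linarith
    qed
    then have "shoot_inside (power_code \<gamma>) (\<Pi>\<^sub>E i\<in>UNIV. ?T) q (\<Pi>\<^sub>E i\<in>UNIV. B i) (2 * n)"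
    proof (rule power_code_shoot_inside_box[rotated 3])
      show "q \<in> (\<Pi>\<^sub>E i\<in>UNIV. ?T)" using q by simp
      show "K \<le> n" using n by simp
      show "B i = ?T" if "K \<le> i" for i using K that by auto
    qed
    then show "shoot_inside (power_code \<gamma>) (topspace ?Y) q W (2 * n)"
      using B(4) V(3) by (auto intro: shoot_inside_mono)
  qed
qed

lemma open_coding_power:
  assumes "open_coding Z \<gamma>"
  shows "open_coding (product_topology (\<lambda>_. Z) UNIV) (power_code \<gamma>)"
proof -
  have "bij_betw (power_code \<gamma>) (topspace (product_topology (\<lambda>_. Z) UNIV)) UNIV"
    using assms bij_betw_power_code[of \<gamma> "topspace Z"] by (simp add: open_coding_def)
  with openin_power_code_cylinder[OF assms] show ?thesis
    unfolding open_coding_def by blast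
qed

section \<open>The Baire space\<close>

lemma topspace_baire_space [simp]: "topspace baire_space = UNIV"
  by (auto simp: baire_space_def)

lemma cylinder_baire_space_eq:
  "cylinder (\<lambda>s. s) UNIV x = (\<Pi>\<^sub>E i\<in>UNIV. if i < length x then {x ! i} else UNIV)"
  by (auto simp: cylinder_def PiE_iff split: if_splits)

lemma open_coding_baire_space: "open_coding baire_space (\<lambda>s. s)"
  unfolding open_coding_def
proof (intro conjI allI)
  show "bij_betw (\<lambda>s. s) (topspace baire_space) UNIV" by (simp add: bij_betw_def)
  fix x :: "nat list"
  have "finite {i. (if i < length x then {x ! i} else UNIV) \<noteq> topspace (discrete_topology UNIV)}"
    by (rule finite_subset[of _ "{..<length x}"]) auto
  then show "openin baire_space (cylinder (\<lambda>s. s) (topspace baire_space) x)"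
    unfolding topspace_baire_space cylinder_baire_space_eq unfolding baire_space_def
    by (intro product_topology_basis) simp_all
qed

lemma deep_growth_baire_space: "deep_growth baire_space (\<lambda>s. s) id"
  unfolding deep_growth_def
proof (intro ballI allI impI)
  fix q :: "nat \<Rightarrow> nat" and U assume "is_neighbourhood baire_space q U"
  then obtain V where V: "openin baire_space V" "q \<in> V" "V \<subseteq> U"
    unfolding is_neighbourhood_def by auto
  then obtain B where B: "q \<in> (\<Pi>\<^sub>E i\<in>UNIV. B i)" "finite {i. B i \<noteq> UNIV}"
      "(\<Pi>\<^sub>E i\<in>UNIV. B i) \<subseteq> V"
    using product_topology_open_contains_basis[OF V(1)[unfolded baire_space_def] V(2)] by auto
  obtain K where K: "{i. B i \<noteq> UNIV} \<subseteq> {..<K}" using finite_nat_bounded[OF B(2)] by auto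
  have "s \<in> U" if "K \<le> n" "\<forall>i<n. s i = q i" for s n
  proof -
    have "s i \<in> B i" for i
      using B(1) K that by (cases "i < K") auto
    then show ?thesis using B(3) V(3) by auto
  qed
  then show "\<exists>M. \<forall>n\<ge>M. shoot_inside (\<lambda>s. s) (topspace baire_space) q U (id n)"
    unfolding shoot_inside_def by (intro exI[of _ K]) auto
qed

section \<open>The Sorgenfrey line\<close>

definition dyadic :: "nat \<Rightarrow> real" where
  "dyadic n = (1 / 2) ^ n"

lemma dyadic_pos: "0 < dyadic n"
  by (simp add: dyadic_def)

lemma dyadic_Suc: "dyadic (Suc n) = dyadic n / 2"
  by (simp add: dyadic_def)

lemma dyadic_add: "dyadic (m + n) = dyadic m * dyadic n"
  by (simp add: dyadic_def power_add)

lemma dyadic_antimono: "m \<le> n \<Longrightarrow> dyadic n \<le> dyadic m"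
  unfolding dyadic_def by (rule power_decreasing) auto

lemma dyadic_le_1: "dyadic n \<le> 1"
  using dyadic_antimono[of 0 n] by (simp add: dyadic_def)

lemma dyadic_less: "0 < e \<Longrightarrow> \<exists>n. dyadic n < e"
  unfolding dyadic_def by (rule real_arch_pow_inv) auto

definition dyadic_piece :: "real \<Rightarrow> real \<Rightarrow> nat \<Rightarrow> real set" where
  "dyadic_piece a l i = {a + l * (1 - dyadic i) ..< a + l * (1 - dyadic (Suc i))}"

lemma dyadic_piece_subset: "0 < l \<Longrightarrow> dyadic_piece a l i \<subseteq> {a..<a + l}"
  unfolding dyadic_piece_def using dyadic_le_1[of i] dyadic_pos[of "Suc i"]
  by (auto intro: order_trans[rotated] simp: mult_nonneg_nonneg)

lemma dyadic_piece_cover: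
  assumes "0 < l" "r \<in> {a..<a + l}"
  shows "\<exists>i. r \<in> dyadic_piece a l i"
proof -
  define u where "u = (r - a) / l"
  have u: "0 \<le> u" "u < 1" using assms by (auto simp: u_def field_simps)
  define k where "k = (LEAST n. dyadic n < 1 - u)"
  have "\<exists>n. dyadic n < 1 - u" using dyadic_less u(2) by simp
  then have k: "dyadic k < 1 - u" "\<And>j. dyadic j < 1 - u \<Longrightarrow> k \<le> j"
    unfolding k_def by (auto intro: LeastI_ex Least_le)
  obtain i where i: "k = Suc i"
    using k(1) u(1) by (cases k) (auto simp: dyadic_def)
  have "1 - dyadic i \<le> u" using k(2)[of i] i by fastforce
  moreover have "r = a + l * u" using assms(1) by (simp add: u_def)
  ultimately have "r \<in> dyadic_piece a l i"
    using k(1) i assms(1) by (simp add: dyadic_piece_def mult_left_mono)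
  then show ?thesis ..
qed

lemma dyadic_piece_disjoint:
  assumes "0 < l" "i \<noteq> j"
  shows "dyadic_piece a l i \<inter> dyadic_piece a l j = {}"
proof -
  have "dyadic_piece a l i \<inter> dyadic_piece a l j = {}" if "i < j" for i j
  proof -
    have "dyadic j \<le> dyadic (Suc i)" using that by (intro dyadic_antimono) simp
    then show ?thesis using assms(1) by (auto simp: dyadic_piece_def)
  qed
  then show ?thesis using assms(2) by (metis inf_commute linorder_neqE_nat)
qed

lemma dyadic_piece_tail:
  assumes "0 < l" "q < a + l"
  obtains N where "\<And>i. N \<le> i \<Longrightarrow> dyadic_piece a l i \<subseteq> {q..<a + l}"
proof -
  have "0 < (a + l - q) / l" using assms by simp
  then obtain N where N: "dyadic N < (a + l - q) / l"
    using dyadic_less by blast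
  have "dyadic_piece a l i \<subseteq> {q..<a + l}" if "N \<le> i" for i
  proof -
    have "l * dyadic i \<le> l * dyadic N" using dyadic_antimono[OF that] assms(1) by simp
    also have "\<dots> < a + l - q" using N assms(1) by (simp add: field_simps)
    finally have "q < a + l * (1 - dyadic i)" by (simp add: algebra_simps)
    then show ?thesis using dyadic_piece_subset[OF assms(1), of a i]
      by (auto simp: dyadic_piece_def)
  qed
  then show ?thesis by (rule that)
qed

lemma nested_Ico_singleton:
  fixes A B :: "nat \<Rightarrow> real"
  assumes "incseq A" and B: "\<And>n. B (Suc n) < B n" and AB: "\<And>n. A n < B n"
    and width: "\<And>e. 0 < e \<Longrightarrow> \<exists>n. B n - A n < e"
  shows "\<exists>p. (\<Inter>n. {A n..<B n}) = {p}"
proof -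
  have "decseq B" using B by (intro decseq_SucI less_imp_le)
  have A_less_B: "A m < B n" for m n
  proof (cases "m \<le> n")
    case True
    with \<open>incseq A\<close> have "A m \<le> A n" by (rule incseqD)
    then show ?thesis using AB[of n] by simp
  next
    case False
    then have "n \<le> m" by simp
    with \<open>decseq B\<close> have "B m \<le> B n" by (rule decseqD)
    then show ?thesis using AB[of m] by simp
  qed
  define p where "p = (SUP n. A n)"
  have "bdd_above (range A)" using A_less_B by (meson bdd_aboveI2 less_imp_le)
  then have "A n \<le> p" for n unfolding p_def by (simp add: cSUP_upper)
  moreover have "p < B n" for n
  proof -
    have "p \<le> B (Suc n)" unfolding p_def using A_less_B by (simp add: cSUP_least less_imp_le)
    then show ?thesis using B[of n] by simp
  qed
  ultimately have p: "p \<in> (\<Inter>n. {A n..<B n})" by simp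
  have "r = p" if r: "r \<in> (\<Inter>n. {A n..<B n})" for r
  proof (rule ccontr)
    assume "r \<noteq> p"
    then obtain n where "B n - A n < \<bar>r - p\<bar>" using width[of "\<bar>r - p\<bar>"] by auto
    moreover have "r \<in> {A n..<B n}" "p \<in> {A n..<B n}" using r p by blast+
    ultimately show False by (auto simp: abs_less_iff)
  qed
  with p show ?thesis by blast
qed

definition seg_len :: "nat list \<Rightarrow> real" where
  "seg_len x = dyadic (sum_list x + length x)"

definition seg_start :: "nat list \<Rightarrow> real" where
  "seg_start x = (\<Sum>j<length x. seg_len (take j x) * (1 - dyadic (x ! j)))"

lemma seg_len_Nil [simp]: "seg_len [] = 1"
  by (simp add: seg_len_def dyadic_def)

lemma seg_start_Nil [simp]: "seg_start [] = 0"
  by (simp add: seg_start_def)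

lemma seg_len_pos: "0 < seg_len x"
  by (simp add: seg_len_def dyadic_pos)

lemma seg_len_le: "seg_len x \<le> dyadic (length x)"
  unfolding seg_len_def by (rule dyadic_antimono) simp

lemma seg_len_snoc: "seg_len (x @ [i]) = seg_len x * dyadic (Suc i)"
  unfolding seg_len_def by (simp add: dyadic_add[symmetric] add_ac)

lemma seg_start_snoc: "seg_start (x @ [i]) = seg_start x + seg_len x * (1 - dyadic i)"
  unfolding seg_start_def by (simp add: nth_append)

text \<open>The first level cuts the line into the unit intervals \<open>[k, k + 1)\<close>, \<open>k \<in> \<int>\<close>; every later
  level cuts each interval into its dyadic pieces.\<close>

fun sorgenfrey_leaf :: "nat list \<Rightarrow> real set" where
  "sorgenfrey_leaf [] = UNIV"
| "sorgenfrey_leaf (z # x) =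
    {of_int (int_decode z) + seg_start x ..< of_int (int_decode z) + seg_start x + seg_len x}"

lemma sorgenfrey_leaf_Cons_snoc:
  "sorgenfrey_leaf (z # x @ [i]) = dyadic_piece (of_int (int_decode z) + seg_start x) (seg_len x) i"
proof -
  have "seg_len x * (1 - dyadic i) + seg_len x * dyadic (Suc i) = seg_len x * (1 - dyadic (Suc i))"
    by (simp add: dyadic_Suc algebra_simps)
  then show ?thesis
    by (simp add: dyadic_piece_def seg_start_snoc seg_len_snoc add.assoc)
qed

lemma topspace_sorgenfrey [simp]: "topspace sorgenfrey = UNIV"
proof -
  have "r \<in> \<Union> {{a..<b} | a b. True}" for r :: real
    by (rule UnionI[of "{r..<r + 1}"]) auto
  then show ?thesis unfolding sorgenfrey_def topology_generated_by_topspace by blast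
qed

lemma openin_sorgenfrey_Ico: "openin sorgenfrey {a..<b}"
  unfolding sorgenfrey_def by (rule topology_generated_by_Basis) blast

lemma openin_sorgenfrey_contains_Ico:
  assumes "openin sorgenfrey V" "q \<in> V"
  shows "\<exists>e>0. {q..<q + e} \<subseteq> V"
proof -
  have "generate_topology_on {{a..<b} | a b. True} V"
    using assms(1) unfolding sorgenfrey_def by (rule openin_topology_generated_by)
  then show ?thesis using assms(2)
  proof (induction arbitrary: q)
    case (Int a b)
    then obtain e1 e2 where "e1 > 0" "{q..<q + e1} \<subseteq> a" "e2 > 0" "{q..<q + e2} \<subseteq> b"
      by (metis IntD1 IntD2)
    moreover have "{q..<q + min e1 e2} \<subseteq> {q..<q + e1} \<inter> {q..<q + e2}" by auto
    ultimately have "{q..<q + min e1 e2} \<subseteq> a \<inter> b" by blast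
    with \<open>e1 > 0\<close> \<open>e2 > 0\<close> show ?case by (intro exI[of _ "min e1 e2"]) simp
  next
    case (UN K)
    then obtain k where "k \<in> K" "q \<in> k" by blast
    with UN.IH show ?case by blast
  next
    case (Basis s)
    then obtain a b where "s = {a..<b}" by blast
    with Basis show ?case by (intro exI[of _ "b - q"]) auto
  qed simp
qed

lemma sorgenfrey_leaf_cover: "sorgenfrey_leaf x = (\<Union>n. sorgenfrey_leaf (x @ [n]))"
proof (cases x)
  case Nil
  have "UNIV \<subseteq> (\<Union>n. sorgenfrey_leaf ([] @ [n]))"
  proof
    fix r :: real
    have "r \<in> sorgenfrey_leaf ([] @ [int_encode \<lfloor>r\<rfloor>])" by simp
    then show "r \<in> (\<Union>n. sorgenfrey_leaf ([] @ [n]))" by (rule UN_I[OF UNIV_I])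
  qed
  then show ?thesis using Nil by auto
next
  case (Cons z x')
  let ?a = "of_int (int_decode z) + seg_start x'"
  have "sorgenfrey_leaf x = {?a..<?a + seg_len x'}" using Cons by simp
  also have "\<dots> = (\<Union>n. dyadic_piece ?a (seg_len x') n)"
  proof
    show "{?a..<?a + seg_len x'} \<subseteq> (\<Union>n. dyadic_piece ?a (seg_len x') n)"
      using dyadic_piece_cover[OF seg_len_pos] by blast
    show "(\<Union>n. dyadic_piece ?a (seg_len x') n) \<subseteq> {?a..<?a + seg_len x'}"
      using dyadic_piece_subset[OF seg_len_pos] by blast
  qed
  also have "\<dots> = (\<Union>n. sorgenfrey_leaf (x @ [n]))"
    using Cons by (simp only: append_Cons sorgenfrey_leaf_Cons_snoc)
  finally show ?thesis .
qed

lemma sorgenfrey_leaf_disjoint: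
  assumes "n \<noteq> m"
  shows "sorgenfrey_leaf (x @ [n]) \<inter> sorgenfrey_leaf (x @ [m]) = {}"
proof (cases x)
  case Nil
  have "int_decode n \<noteq> int_decode m" using assms by (simp add: int_decode_eq)
  then have "\<lfloor>r\<rfloor> \<noteq> int_decode n \<or> \<lfloor>r\<rfloor> \<noteq> int_decode m" for r :: real by auto
  then show ?thesis using Nil by (auto simp: floor_eq_iff)
next
  case (Cons z x')
  then show ?thesis
    using dyadic_piece_disjoint[OF seg_len_pos assms] by (simp only: append_Cons sorgenfrey_leaf_Cons_snoc)
qed

lemma sorgenfrey_leaf_branch: "\<exists>p. \<Inter> (sorgenfrey_leaf ` range (seq_prefix f)) = {p}"
proof -
  define g where "g = (\<lambda>i. f (Suc i))"
  define A where "A n = of_int (int_decode (f 0)) + seg_start (seq_prefix g n)" for n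
  define L where "L n = seg_len (seq_prefix g n)" for n
  have A_Suc: "A (Suc n) = A n + L n * (1 - dyadic (g n))" for n
    by (simp add: A_def L_def seq_prefix_Suc seg_start_snoc)
  have L_Suc: "L (Suc n) = L n * dyadic (Suc (g n))" for n
    by (simp add: L_def seq_prefix_Suc seg_len_snoc)
  have L_pos: "0 < L n" for n by (simp add: L_def seg_len_pos)
  have "\<exists>p. (\<Inter>n. {A n..<A n + L n}) = {p}"
  proof (rule nested_Ico_singleton)
    show "incseq A"
    proof (rule incseq_SucI)
      fix n
      have "0 \<le> L n * (1 - dyadic (g n))"
        using L_pos[of n] dyadic_le_1[of "g n"] by simp
      then show "A n \<le> A (Suc n)" by (simp add: A_Suc)
    qed
    show "A (Suc n) + L (Suc n) < A n + L n" for n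
      using L_pos[of n] dyadic_pos[of "Suc (g n)"]
      by (simp add: A_Suc L_Suc dyadic_Suc algebra_simps)
    show "A n < A n + L n" for n using L_pos[of n] by simp
    show "\<exists>n. A n + L n - A n < e" if e: "0 < e" for e
    proof -
      obtain n where "dyadic n < e" using dyadic_less[OF e] ..
      moreover have "L n \<le> dyadic n" using seg_len_le[of "seq_prefix g n"] by (simp add: L_def)
      ultimately show ?thesis by (intro exI[of _ n]) simp
    qed
  qed
  moreover have "\<Inter> (sorgenfrey_leaf ` range (seq_prefix f)) = (\<Inter>n. {A n..<A n + L n})"
  proof -
    have "sorgenfrey_leaf (seq_prefix f (Suc n)) = {A n..<A n + L n}" for n
      by (simp add: seq_prefix_Suc_Cons g_def A_def L_def)
    moreover have "\<Inter> (sorgenfrey_leaf ` range (seq_prefix f)) =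
        (\<Inter>n. sorgenfrey_leaf (seq_prefix f (Suc n)))"
      by (auto simp: image_def) (metis old.nat.exhaust seq_prefix_0 sorgenfrey_leaf.simps(1) UNIV_I)
    ultimately show ?thesis by simp
  qed
  ultimately show ?thesis by simp
qed

lemma baire_foliage_tree_sorgenfrey_leaf: "baire_foliage_tree sorgenfrey sorgenfrey_leaf"
  unfolding baire_foliage_tree_def strict_branches_def
proof (intro conjI allI impI)
  show "openin sorgenfrey (sorgenfrey_leaf x)" for x
    using openin_topspace[of sorgenfrey] by (cases x) (simp_all add: openin_sorgenfrey_Ico)
  show "locally_strict sorgenfrey_leaf"
    unfolding locally_strict_iff using sorgenfrey_leaf_cover sorgenfrey_leaf_disjoint by blast
  show "\<exists>p. \<Inter> (sorgenfrey_leaf ` B) = {p}" if "is_branch B" for B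
    using branch_eq_range_seq_prefix[OF that] sorgenfrey_leaf_branch by auto
qed simp

lemma sorgenfrey_leaf_sons_near:
  assumes "q \<in> sorgenfrey_leaf (z # x)"
  obtains N where "\<And>i. N \<le> i \<Longrightarrow> sorgenfrey_leaf (z # x @ [i]) \<subseteq> {q..<q + seg_len x}"
proof -
  let ?a = "of_int (int_decode z) + seg_start x"
  have q: "?a \<le> q" "q < ?a + seg_len x" using assms by simp_all
  obtain N where "\<And>i. N \<le> i \<Longrightarrow> dyadic_piece ?a (seg_len x) i \<subseteq> {q..<?a + seg_len x}"
    using dyadic_piece_tail[OF seg_len_pos q(2)] by blast
  with q(1) have "\<And>i. N \<le> i \<Longrightarrow> sorgenfrey_leaf (z # x @ [i]) \<subseteq> {q..<q + seg_len x}"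
    unfolding sorgenfrey_leaf_Cons_snoc by fastforce
  then show thesis by (rule that)
qed

lemma sorgenfrey_coding:
  obtains \<gamma> where "open_coding sorgenfrey \<gamma>" "deep_growth sorgenfrey \<gamma> id"
proof -
  obtain \<gamma> where \<gamma>: "open_coding sorgenfrey \<gamma>" and leaf: "sorgenfrey_leaf = cylinder \<gamma> UNIV"
    using baire_foliage_tree_imp_coding[OF baire_foliage_tree_sorgenfrey_leaf] by auto
  have "deep_growth sorgenfrey \<gamma> id"
    unfolding deep_growth_def
  proof (intro ballI allI impI)
    fix q U assume "is_neighbourhood sorgenfrey q U"
    then obtain e where e: "0 < e" "{q..<q + e} \<subseteq> U"
      using openin_sorgenfrey_contains_Ico unfolding is_neighbourhood_def by (meson order_trans)
    obtain M where M: "dyadic M < e" using dyadic_less[OF e(1)] ..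
    have "shoot_inside \<gamma> UNIV q U (Suc m)" if "M \<le> m" for m
    proof -
      let ?x = "seq_prefix (\<lambda>i. \<gamma> q (Suc i)) m"
      have "q \<in> sorgenfrey_leaf (\<gamma> q 0 # ?x)"
        unfolding leaf seq_prefix_Suc_Cons[symmetric] by (simp add: mem_cylinder_seq_prefix)
      then obtain N where N: "\<And>i. N \<le> i \<Longrightarrow> sorgenfrey_leaf (\<gamma> q 0 # ?x @ [i]) \<subseteq> {q..<q + seg_len ?x}"
        by (rule sorgenfrey_leaf_sons_near) auto
      have "seg_len ?x < e"
        using seg_len_le[of ?x] dyadic_antimono[OF that] M by simp
      show ?thesis
      proof (rule shoot_insideI)
        fix i assume "N \<le> i"
        then have "sorgenfrey_leaf (\<gamma> q 0 # ?x @ [i]) \<subseteq> U"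
          using N \<open>seg_len ?x < e\<close> e(2) by fastforce
        then show "cylinder \<gamma> UNIV (seq_prefix (\<gamma> q) (Suc m) @ [i]) \<subseteq> U"
          unfolding leaf seq_prefix_Suc_Cons by simp
      qed
    qed
    then have "shoot_inside \<gamma> UNIV q U n" if "Suc M \<le> n" for n
      using that by (cases n) simp_all
    then show "\<exists>M. \<forall>n\<ge>M. shoot_inside \<gamma> (topspace sorgenfrey) q U (id n)"
      by auto
  qed
  with \<gamma> show thesis ..
qed

theorem corollary22:
  fixes X :: "'a topology"
  assumes "has_pi_tree X"
  shows "has_pi_tree (prod_topology X baire_space) \<and>
         has_pi_tree (prod_topology X sorgenfrey) \<and>
         has_pi_tree (prod_topology X sorgenfrey_power)"
proof -
  obtain \<phi> where \<phi>: "pi_coding X \<phi>"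
    using assms unfolding has_pi_tree_iff_pi_coding ..
  obtain \<gamma> where \<gamma>: "open_coding sorgenfrey \<gamma>" "deep_growth sorgenfrey \<gamma> id"
    by (rule sorgenfrey_coding)
  have "pi_coding (prod_topology X baire_space) (prod_code \<phi> (\<lambda>s. s))"
    using \<phi> open_coding_baire_space deep_growth_double[OF deep_growth_baire_space]
    by (rule pi_coding_prod)
  moreover have "pi_coding (prod_topology X sorgenfrey) (prod_code \<phi> \<gamma>)"
    using \<phi> \<gamma>(1) deep_growth_double[OF \<gamma>(2)] by (rule pi_coding_prod)
  moreover have "pi_coding (prod_topology X sorgenfrey_power) (prod_code \<phi> (power_code \<gamma>))"
    unfolding sorgenfrey_power_def
    using \<phi> open_coding_power[OF \<gamma>(1)] deep_growth_power[OF \<gamma>(2)] by (rule pi_coding_prod)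
  ultimately show ?thesis
    unfolding has_pi_tree_iff_pi_coding by auto
qed

end
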